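(* Let $t<k$ and $n>2k-t$. Let $\delta$ be a $t$-space and $\pi$ a $k$-space in $\mathrm{PG}(n,q)$ with $\dim(\pi\cap\delta)=t-1$. Let $S_1$ be the set of all $k$-spaces in $\langle\pi,\delta\rangle$, let $S_2$ be the set of all $k$-spaces containing $\delta$ and meeting $\langle\pi,\delta\rangle$ in at least a $(t+1)$-space, and let $\mathcal{S}=S_1\cup S_2$. Then $\mathcal{S}$ is a maximal set of $k$-spaces in $\mathrm{PG}(n,q)$ pairwise intersecting in at least a $t$-space, and \[|\mathcal{S}|=\theta_{k+1}-\theta_{k-t}+\left[{n-t\atop k-t}\right]_q-q^{(k-t+1)(k-t)}\left[{n-k-1\atop k-t}\right]_q=\theta_{k+1}+\sum_{j=0}^{k-t-2}\left[{k-t+1\atop j+1}\right]_q q^{(k-t-j)(k-t-j-1)}\left[{n-k-1\atop k-t-j-1}\right]_q.\]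
   Context: $k$-spaces are projective subspaces of dimension $k$; "intersecting in at least a $t$-space" means the intersection has projective dimension at least $t$. Maximal means no further $k$-space can be added while keeping the property. $\left[{n\atop k}\right]_q=\frac{(q^n-1)\cdots(q^{n-k+1}-1)}{(q^k-1)\cdots(q-1)}$ for $k>0$, $=1$ for $k=0$; $\theta_m=\frac{q^{m+1}-1}{q-1}$. *)

theory Defs
  imports "HOL-Analysis.Analysis"
begin

text \<open>PG(n,q) is modelled by the vector space 'a^'n over a finite field 'a with
  q = CARD('a) and n = CARD('n) - 1.  A projective k-space is a vector subspace of
  (vector) dimension k+1.\<close>

definition kspace :: "nat \<Rightarrow> ('a::field ^ 'n) set \<Rightarrow> bool" where
  "kspace k S \<longleftrightarrow> vec.subspace S \<and> vec.dim S = k + 1"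

definition meet_atleast :: "nat \<Rightarrow> ('a::field ^ 'n) set \<Rightarrow> ('a ^ 'n) set \<Rightarrow> bool" where
  "meet_atleast t A B \<longleftrightarrow> vec.dim (A \<inter> B) \<ge> t + 1"

definition t_intersecting :: "nat \<Rightarrow> nat \<Rightarrow> ('a::field ^ 'n) set set \<Rightarrow> bool" where
  "t_intersecting k t F \<longleftrightarrow> (\<forall>A\<in>F. kspace k A) \<and> (\<forall>A\<in>F. \<forall>B\<in>F. meet_atleast t A B)"

definition maximal_t_intersecting :: "nat \<Rightarrow> nat \<Rightarrow> ('a::field ^ 'n) set set \<Rightarrow> bool" where
  "maximal_t_intersecting k t F \<longleftrightarrow> t_intersecting k t F \<and>
     (\<forall>K. kspace k K \<and> K \<notin> F \<longrightarrow> \<not> t_intersecting k t (insert K F))"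

definition gauss_binom :: "real \<Rightarrow> nat \<Rightarrow> nat \<Rightarrow> real" where
  "gauss_binom q n k = (\<Prod>i<k. (q ^ (n - i) - 1) / (q ^ (k - i) - 1))"

definition theta :: "real \<Rightarrow> nat \<Rightarrow> real" where
  "theta q m = (q ^ (m + 1) - 1) / (q - 1)"

end

theory Submission
  imports Defs
begin

text \<open>Write J for the (k+1)-space spanned by \<pi> and \<delta>. Two members of S1 are hyperplanes of J
  and meet in a (k-1)-space, a member of S1 and a member of S2 meet in at least a t-space by the
  dimension formula inside J, and members of S2 share \<delta>. For maximality let K be a k-space
  outside the family. If \<delta> \<subseteq> K, then K \<inter> J = \<delta>, and a hyperplane of J missing a point of \<delta>
  is a member of S1 meeting K in less than a t-space. Otherwise there is a (t+1)-space T with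
  \<delta> \<subset> T \<subseteq> J meeting K in at most a (t-1)-space, and since n > 2k - t it extends greedily to a
  member of S2 that still meets K in at most a (t-1)-space.

  For the size, sort the k-spaces through \<delta> by the dimension j of their intersection with J;
  each class is counted by double counting ordered bases, which yields a product of Gaussian
  binomials. S2 - S1 consists of the classes t < j < k, and the extreme classes j = t and j = k
  are what is subtracted from the number [n-t, k-t] of all k-spaces through \<delta>.\<close>


section \<open>Subspaces of a finite vector space\<close>

lemma card_field_gt_1: "real CARD('a::{field,finite}) > 1"
proof -
  have "card {0::'a, 1} \<le> CARD('a)" by (rule card_mono) auto
  then show ?thesis by simp
qed

lemma card_span_independent:
  fixes B :: "('a::{field,finite}^'n) set"
  assumes "vec.independent B"
  shows "card (vec.span B) = CARD('a) ^ card B"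
proof -
  have "finite B" using assms vec.finiteI_independent by blast
  then show ?thesis using assms
  proof (induction B rule: finite_induct)
    case empty
    then show ?case by simp
  next
    case (insert x F)
    have x_notin: "x \<notin> vec.span F" and indep_F: "vec.independent F"
      using insert.prems insert.hyps by (auto simp: vec.independent_insert)
    let ?g = "\<lambda>(c, y). c *s x + y"
    have image: "vec.span (insert x F) = ?g ` (UNIV \<times> vec.span F)"
    proof (intro equalityI subsetI)
      fix z assume "z \<in> vec.span (insert x F)"
      then obtain c where "z - c *s x \<in> vec.span F" using vec.span_breakdown_eq by blast
      then show "z \<in> ?g ` (UNIV \<times> vec.span F)" by (intro image_eqI[of _ _ "(c, z - c *s x)"]) auto
    next
      fix z assume "z \<in> ?g ` (UNIV \<times> vec.span F)"
      then obtain c y where z: "z = c *s x + y" and y: "y \<in> vec.span F" by auto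
      have "c *s x \<in> vec.span (insert x F)" by (simp add: vec.span_base vec.span_scale)
      moreover have "y \<in> vec.span (insert x F)" using y vec.span_mono[of F "insert x F"] by blast
      ultimately show "z \<in> vec.span (insert x F)" unfolding z by (rule vec.span_add)
    qed
    have "inj_on ?g (UNIV \<times> vec.span F)"
    proof (rule inj_onI, clarify)
      fix c y c' y'
      assume y: "y \<in> vec.span F" "y' \<in> vec.span F" and eq: "c *s x + y = c' *s x + y'"
      have "(c - c') *s x = y' - y" using eq by (simp add: algebra_simps vector_sub_rdistrib)
      then have "c \<noteq> c' \<Longrightarrow> x = inverse (c - c') *s (y' - y)"
        by (metis right_minus_eq vec.scale_left_imp_eq vector_smult_assoc right_inverse vector_smult_lid)
      moreover have "inverse (c - c') *s (y' - y) \<in> vec.span F"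
        using y by (intro vec.span_scale vec.span_diff)
      ultimately have "c = c'" using x_notin by auto
      then show "c = c' \<and> y = y'" using eq by simp
    qed
    then have "card (vec.span (insert x F)) = CARD('a) * card (vec.span F)"
      by (simp add: image card_image card_cartesian_product)
    then show ?case using insert indep_F by simp
  qed
qed

lemma card_subspace:
  fixes S :: "('a::{field,finite}^'n) set"
  assumes "vec.subspace S"
  shows "card S = CARD('a) ^ vec.dim S"
proof -
  obtain B where "B \<subseteq> S" "vec.independent B" "S \<subseteq> vec.span B" "card B = vec.dim S"
    using vec.basis_exists[of S] by blast
  moreover then have "vec.span B = S" using assms vec.span_subspace by blast
  ultimately show ?thesis using card_span_independent by metis
qed

lemma dim_Un_Int:
  fixes S T :: "('a::field^'n) set"
  assumes "vec.subspace S" "vec.subspace T"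
  shows "vec.dim (S \<union> T) + vec.dim (S \<inter> T) = vec.dim S + vec.dim T"
proof -
  have "vec.span S = S" "vec.span T = T" using assms by simp_all
  then have "vec.span (S \<union> T) = {x + y |x y. x \<in> S \<and> y \<in> T}"
    using vec.span_Un[of S T] by (simp only:)
  then show ?thesis using vec.dim_sums_Int[OF assms] vec.dim_span[of "S \<union> T"] by simp
qed

lemma dim_psubset_subspace:
  fixes A B :: "('a::field^'n) set"
  assumes "vec.subspace A" "vec.subspace B" "B \<subset> A"
  shows "vec.dim B < vec.dim A"
  using vec.dim_psubset[of B A] assms vec.span_eq_iff by metis

lemma exists_hyperplane_not_containing:
  fixes A :: "('a::field^'n) set"
  assumes A: "vec.subspace A" and "v \<in> A" "v \<noteq> 0"
  obtains H where "vec.subspace H" "H \<subseteq> A" "vec.dim H + 1 = vec.dim A" "v \<notin> H"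
proof -
  have "vec.independent {v}" using \<open>v \<noteq> 0\<close> by simp
  then obtain B where B: "{v} \<subseteq> B" "B \<subseteq> A" "vec.independent B" "A \<subseteq> vec.span B"
    using vec.maximal_independent_subset_extend[of "{v}" A] \<open>v \<in> A\<close> by auto
  have "finite B" using B(3) vec.finiteI_independent by blast
  have indep: "vec.independent (B - {v})" using B(3) vec.independent_mono by blast
  have "B = insert v (B - {v})" using B(1) by blast
  then have "v \<notin> vec.span (B - {v})" using B(3) vec.independent_insert by (metis Diff_iff singletonI)
  moreover have "card B = vec.dim A" by (rule vec.basis_card_eq_dim[OF B(2,4,3)])
  then have "vec.dim (vec.span (B - {v})) + 1 = vec.dim A"
    using vec.dim_eq_card_independent[OF indep] B(1) \<open>finite B\<close> card_gt_0_iff[of B] by auto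
  moreover have "vec.span (B - {v}) \<subseteq> A" using B(2) A by (intro vec.span_minimal) auto
  ultimately show ?thesis using that[of "vec.span (B - {v})"] by simp
qed

lemma dim_Int_span_insert_le:
  fixes K C :: "('a::field^'n) set"
  assumes K: "vec.subspace K" and C: "vec.subspace C"
  shows "vec.dim (K \<inter> vec.span (insert w C)) \<le> vec.dim (K \<inter> C) + 1"
proof -
  let ?C' = "vec.span (insert w C)"
  have "vec.dim ?C' \<le> vec.dim C + 1" by (simp add: vec.dim_insert)
  moreover have "vec.dim (K \<union> C) \<le> vec.dim (K \<union> ?C')"
    using vec.span_superset[of "insert w C"] by (intro vec.dim_subset) auto
  ultimately show ?thesis
    using dim_Un_Int[OF K C] dim_Un_Int[OF K vec.subspace_span[of "insert w C"]] by linarith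
qed

lemma dim_Int_span_insert_eq:
  fixes K C :: "('a::field^'n) set"
  assumes K: "vec.subspace K" and C: "vec.subspace C" and w: "w \<notin> vec.span (K \<union> C)"
  shows "vec.dim (K \<inter> vec.span (insert w C)) = vec.dim (K \<inter> C)"
proof -
  let ?C' = "vec.span (insert w C)"
  have "w \<notin> vec.span C" using w vec.span_mono[of C "K \<union> C"] by blast
  then have "vec.dim ?C' = vec.dim C + 1" by (simp add: vec.dim_insert)
  moreover have "vec.dim (insert w (K \<union> C)) \<le> vec.dim (K \<union> ?C')"
    using vec.span_superset[of "insert w C"] by (intro vec.dim_subset) auto
  moreover have "vec.dim (insert w (K \<union> C)) = vec.dim (K \<union> C) + 1"
    using w by (simp add: vec.dim_insert)
  moreover have "vec.dim (K \<inter> C) \<le> vec.dim (K \<inter> ?C')"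
    using vec.span_superset[of "insert w C"] by (intro vec.dim_subset) auto
  ultimately show ?thesis
    using dim_Un_Int[OF K C] dim_Un_Int[OF K vec.subspace_span[of "insert w C"]] by linarith
qed

text \<open>Enlarge C one vector at a time, choosing the vector outside span (K \<union> C) as long as that
  is a proper subspace: such a step leaves K \<inter> C unchanged. Once span (K \<union> C) is the whole
  space, the dimension formula bounds the intersection.\<close>

lemma exists_superspace_meeting_small:
  fixes C K :: "('a::field^'n) set"
  assumes "vec.subspace C" "vec.subspace K" "vec.dim C \<le> m" "m \<le> CARD('n)"
  shows "\<exists>K'. vec.subspace K' \<and> C \<subseteq> K' \<and> vec.dim K' = m
           \<and> vec.dim (K \<inter> K') \<le> max (vec.dim (K \<inter> C)) (vec.dim K + m - CARD('n))"
  using assms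
proof (induction "m - vec.dim C" arbitrary: C)
  case 0
  then show ?case by (intro exI[of _ C]) auto
next
  case (Suc r)
  have C: "vec.subspace C" and K: "vec.subspace K" and "vec.dim C < m" using Suc by auto
  obtain w where "w \<notin> C" and step:
    "vec.dim (K \<inter> vec.span (insert w C)) \<le> max (vec.dim (K \<inter> C)) (vec.dim K + m - CARD('n))"
  proof (cases "vec.span (K \<union> C) = UNIV")
    case True
    have "C \<noteq> UNIV" using \<open>vec.dim C < m\<close> Suc.prems(4) vec_dim_card[where 'a='a and 'n='n] by auto
    then obtain w where "w \<notin> C" by auto
    have "CARD('n) = vec.dim (K \<union> C)" using True vec_dim_card vec.dim_span by metis
    also have "\<dots> \<le> vec.dim (K \<union> vec.span (insert w C))"
      using vec.span_superset[of "insert w C"] by (intro vec.dim_subset) auto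
    finally have "CARD('n) \<le> vec.dim (K \<union> vec.span (insert w C))" .
    moreover have "vec.dim (vec.span (insert w C)) \<le> vec.dim C + 1" by (simp add: vec.dim_insert)
    ultimately have "vec.dim (K \<inter> vec.span (insert w C)) \<le> vec.dim K + (vec.dim C + 1) - CARD('n)"
      using dim_Un_Int[OF K vec.subspace_span[of "insert w C"]] by linarith
    then show ?thesis using that[OF \<open>w \<notin> C\<close>] \<open>vec.dim C < m\<close> by simp
  next
    case False
    then obtain w where w: "w \<notin> vec.span (K \<union> C)" by blast
    then have "w \<notin> C" using vec.span_superset[of "K \<union> C"] by blast
    then show ?thesis using that dim_Int_span_insert_eq[OF K C w] by simp
  qed
  let ?C' = "vec.span (insert w C)"
  have "w \<notin> vec.span C" using \<open>w \<notin> C\<close> C vec.span_eq_iff by blast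
  then have dim_C': "vec.dim ?C' = vec.dim C + 1" by (simp add: vec.dim_insert)
  then have "r = m - vec.dim ?C'" using Suc.hyps(2) by simp
  then obtain K' where "vec.subspace K'" "?C' \<subseteq> K'" "vec.dim K' = m"
    "vec.dim (K \<inter> K') \<le> max (vec.dim (K \<inter> ?C')) (vec.dim K + m - CARD('n))"
    using Suc.hyps(1)[of ?C'] Suc.prems(2,4) \<open>vec.dim C < m\<close> dim_C' by auto
  moreover have "C \<subseteq> ?C'" using vec.span_superset[of "insert w C"] by blast
  ultimately show ?case using step by (intro exI[of _ K']) auto
qed

section \<open>Counting subspaces by their intersection with a fixed subspace\<close>

fun independent_over :: "('a::field^'n) set \<Rightarrow> ('a^'n) list \<Rightarrow> bool" where
  "independent_over D [] \<longleftrightarrow> True"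
| "independent_over D (v # vs) \<longleftrightarrow> independent_over D vs \<and> v \<notin> vec.span (D \<union> set vs)"

lemma dim_Un_set_independent_over:
  assumes "independent_over D vs"
  shows "vec.dim (D \<union> set vs) = vec.dim D + length vs"
  using assms
proof (induction vs)
  case (Cons v vs)
  have "D \<union> set (v # vs) = insert v (D \<union> set vs)" by auto
  then show ?case using Cons by (simp add: vec.dim_insert)
qed simp

lemma independent_over_append:
  "independent_over D (ws @ us) \<longleftrightarrow> independent_over D us \<and> independent_over (D \<union> set us) ws"
proof (induction ws)
  case (Cons w ws)
  have "D \<union> set (ws @ us) = (D \<union> set us) \<union> set ws" by auto
  then show ?case using Cons by auto
qed simp

lemma independent_over_antimono:
  assumes "E \<subseteq> vec.span E'" "independent_over E' ws"
  shows "independent_over E ws"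
  using assms(2)
proof (induction ws)
  case (Cons v vs)
  have "E \<union> set vs \<subseteq> vec.span (E' \<union> set vs)"
    using assms(1) vec.span_mono[of E' "E' \<union> set vs"] vec.span_superset[of "E' \<union> set vs"] by auto
  then have "vec.span (E \<union> set vs) \<subseteq> vec.span (E' \<union> set vs)"
    using vec.span_minimal vec.subspace_span by blast
  then show ?case using Cons by auto
qed simp

lemma independent_over_Int:
  fixes A K :: "('a::field^'n) set"
  assumes A: "vec.subspace A" and K: "vec.subspace K"
    and "independent_over (K \<inter> A) ws" "set ws \<subseteq> K"
  shows "independent_over A ws"
  using assms(3,4)
proof (induction ws)
  case (Cons v vs)
  have "v \<notin> vec.span (A \<union> set vs)"
  proof
    assume "v \<in> vec.span (A \<union> set vs)"
    then obtain x y where v: "v = x + y" and x: "x \<in> vec.span A" and y: "y \<in> vec.span (set vs)"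
      using vec.span_Un[of A "set vs"] by blast
    have vK: "v \<in> K" and "set vs \<subseteq> K" using Cons.prems(2) by auto
    then have "y \<in> K" using vec.span_minimal[OF _ K, of "set vs"] y by blast
    then have "v - y \<in> K" by (rule vec.subspace_diff[OF K vK])
    then have "x \<in> K" using v by simp
    moreover have "x \<in> A" using x A vec.span_eq_iff by blast
    ultimately have "x \<in> vec.span (K \<inter> A \<union> set vs)" using vec.span_superset[of "K \<inter> A \<union> set vs"] by blast
    moreover have "y \<in> vec.span (K \<inter> A \<union> set vs)" using y vec.span_mono[of "set vs" "K \<inter> A \<union> set vs"] by blast
    ultimately have "v \<in> vec.span (K \<inter> A \<union> set vs)" unfolding v by (rule vec.span_add)
    then show False using Cons.prems(1) by simp
  qed
  then show ?case using Cons by simp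
qed simp

definition independent_tuples :: "('a::field^'n) set \<Rightarrow> ('a^'n) set \<Rightarrow> nat \<Rightarrow> ('a^'n) list set" where
  "independent_tuples D S r = {vs. length vs = r \<and> set vs \<subseteq> S \<and> independent_over D vs}"

lemma finite_independent_tuples:
  fixes D S :: "('a::{field,finite}^'n) set"
  shows "finite (independent_tuples D S r)"
proof (rule finite_subset)
  show "independent_tuples D S r \<subseteq> {vs. set vs \<subseteq> UNIV \<and> length vs = r}"
    unfolding independent_tuples_def by auto
qed (rule finite_lists_length_eq, simp)

lemma independent_tuples_Suc:
  "independent_tuples D S (Suc r)
     = (\<Union>vs\<in>independent_tuples D S r. (\<lambda>v. v # vs) ` (S - vec.span (D \<union> set vs)))"
    (is "?lhs = ?rhs")
proof
  show "?lhs \<subseteq> ?rhs"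
  proof
    fix xs assume "xs \<in> ?lhs"
    then obtain v vs where "xs = v # vs" "length vs = r" "set (v # vs) \<subseteq> S" "independent_over D (v # vs)"
      unfolding independent_tuples_def by (cases xs) auto
    then show "xs \<in> ?rhs" unfolding independent_tuples_def by auto
  qed
  show "?rhs \<subseteq> ?lhs" unfolding independent_tuples_def by auto
qed

lemma card_independent_tuples:
  fixes D S :: "('a::{field,finite}^'n) set"
  defines "q \<equiv> real CARD('a)"
  assumes S: "vec.subspace S" and "D \<subseteq> S" and "vec.dim D + r \<le> vec.dim S"
  shows "real (card (independent_tuples D S r)) = (\<Prod>j<r. q ^ vec.dim S - q ^ (vec.dim D + j))"
  using assms(4)
proof (induction r)
  case 0
  have "independent_tuples D S 0 = {[]}" unfolding independent_tuples_def by auto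
  then show ?case by simp
next
  case (Suc r)
  have extensions: "real (card (S - vec.span (D \<union> set vs))) = q ^ vec.dim S - q ^ (vec.dim D + r)"
    if vs: "vs \<in> independent_tuples D S r" for vs
  proof -
    have sub: "vec.span (D \<union> set vs) \<subseteq> S"
      using vs S \<open>D \<subseteq> S\<close> unfolding independent_tuples_def by (intro vec.span_minimal) auto
    have "vec.dim (vec.span (D \<union> set vs)) = vec.dim D + r"
      using vs dim_Un_set_independent_over[of D vs] unfolding independent_tuples_def by simp
    then have "card (vec.span (D \<union> set vs)) = CARD('a) ^ (vec.dim D + r)"
      using card_subspace[of "vec.span (D \<union> set vs)"] by simp
    moreover have "card (vec.span (D \<union> set vs)) \<le> card S" by (rule card_mono[OF _ sub]) simp
    ultimately show ?thesis
      using sub card_subspace[OF S] by (simp add: card_Diff_subset q_def)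
  qed
  have "card (independent_tuples D S (Suc r))
      = (\<Sum>vs\<in>independent_tuples D S r. card ((\<lambda>v. v # vs) ` (S - vec.span (D \<union> set vs))))"
    unfolding independent_tuples_Suc
    by (rule card_UN_disjoint) (auto simp: finite_independent_tuples)
  also have "\<dots> = (\<Sum>vs\<in>independent_tuples D S r. card (S - vec.span (D \<union> set vs)))"
    by (simp add: card_image inj_on_def)
  finally have "real (card (independent_tuples D S (Suc r)))
      = real (card (independent_tuples D S r)) * (q ^ vec.dim S - q ^ (vec.dim D + r))"
    using extensions by simp
  then show ?case using Suc by simp
qed

lemma card_eq_card_mult_fibre:
  assumes "finite X" "finite T" "f ` X \<subseteq> T"
    and "\<And>y. y \<in> T \<Longrightarrow> of_nat (card {x \<in> X. f x = y}) = c"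
  shows "of_nat (card X) = of_nat (card T) * (c :: 'b::semiring_1)"
proof -
  have "card X = (\<Sum>y\<in>T. card {x \<in> X. f x = y})"
    using card_eq_sum[of X] sum.group[OF assms(1-3), of "\<lambda>_. 1::nat"] by simp
  then have "of_nat (card X) = (\<Sum>y\<in>T. (of_nat (card {x \<in> X. f x = y}) :: 'b))" by simp
  also have "\<dots> = of_nat (card T) * c" using assms(4) by simp
  finally show ?thesis .
qed

definition subspaces_meeting :: "nat \<Rightarrow> ('a::field^'n) set \<Rightarrow> ('a^'n) set \<Rightarrow> nat \<Rightarrow> ('a^'n) set set" where
  "subspaces_meeting m D A i = {K. vec.subspace K \<and> vec.dim K = m \<and> D \<subseteq> K \<and> vec.dim (K \<inter> A) = i}"

lemma span_tuples_mem_subspaces_meeting: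
  fixes D A :: "('a::field^'n) set"
  assumes A: "vec.subspace A" and "D \<subseteq> A" "vec.dim D \<le> i" "i \<le> m"
    and us: "us \<in> independent_tuples D A (i - vec.dim D)"
    and ws: "ws \<in> independent_tuples A UNIV (m - i)"
  shows "vec.span (D \<union> set us \<union> set ws) \<in> subspaces_meeting m D A i"
proof -
  let ?K = "vec.span (D \<union> set us \<union> set ws)"
  have DusA: "D \<union> set us \<subseteq> A" using us \<open>D \<subseteq> A\<close> unfolding independent_tuples_def by auto
  have "independent_over (D \<union> set us) ws"
    using independent_over_antimono[of "D \<union> set us" A ws] DusA vec.span_superset[of A] ws
    unfolding independent_tuples_def by blast
  then have "independent_over D (ws @ us)"
    using us independent_over_append unfolding independent_tuples_def by blast
  moreover have "D \<union> set (ws @ us) = D \<union> set us \<union> set ws" by auto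
  ultimately have dim_K: "vec.dim ?K = m"
    using dim_Un_set_independent_over[of D "ws @ us"] us ws assms(3,4)
    unfolding independent_tuples_def by simp
  have "vec.span (?K \<union> A) = vec.span (A \<union> set ws)"
  proof -
    have "?K \<subseteq> vec.span (A \<union> set ws)"
      using DusA vec.span_superset[of "A \<union> set ws"] by (intro vec.span_minimal) auto
    moreover have "A \<subseteq> vec.span (A \<union> set ws)" using vec.span_superset by blast
    moreover have "set ws \<subseteq> ?K" using vec.span_superset by blast
    then have "A \<union> set ws \<subseteq> vec.span (?K \<union> A)" using vec.span_superset[of "?K \<union> A"] by blast
    ultimately show ?thesis unfolding vec.span_eq by simp
  qed
  then have "vec.dim (?K \<union> A) = vec.dim (A \<union> set ws)"
    by (metis vec.dim_span)
  also have "\<dots> = vec.dim A + (m - i)"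
    using dim_Un_set_independent_over[of A ws] ws unfolding independent_tuples_def by simp
  finally have "vec.dim (?K \<union> A) = vec.dim A + (m - i)" .
  moreover have "vec.dim (?K \<union> A) + vec.dim (?K \<inter> A) = vec.dim ?K + vec.dim A"
    by (rule dim_Un_Int[OF vec.subspace_span A])
  ultimately have "vec.dim (?K \<inter> A) = i" using dim_K \<open>i \<le> m\<close> by linarith
  moreover have "D \<subseteq> ?K" using vec.span_superset[of "D \<union> set us \<union> set ws"] by blast
  ultimately show ?thesis unfolding subspaces_meeting_def using dim_K by simp
qed

lemma span_tuples_eq_iff:
  fixes D A K :: "('a::field^'n) set"
  assumes A: "vec.subspace A" and "D \<subseteq> A" "vec.dim D \<le> i" "i \<le> m"
    and K: "K \<in> subspaces_meeting m D A i"
  shows "(us \<in> independent_tuples D A (i - vec.dim D) \<and> ws \<in> independent_tuples A UNIV (m - i)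
            \<and> vec.span (D \<union> set us \<union> set ws) = K)
       \<longleftrightarrow> (us \<in> independent_tuples D (K \<inter> A) (i - vec.dim D)
            \<and> ws \<in> independent_tuples (K \<inter> A) K (m - i))"
proof
  assume lhs: "us \<in> independent_tuples D A (i - vec.dim D) \<and> ws \<in> independent_tuples A UNIV (m - i)
      \<and> vec.span (D \<union> set us \<union> set ws) = K"
  then have us: "us \<in> independent_tuples D A (i - vec.dim D)"
    and ws: "ws \<in> independent_tuples A UNIV (m - i)"
    and span: "vec.span (D \<union> set us \<union> set ws) = K" by auto
  have "set us \<union> set ws \<subseteq> K"
    using vec.span_superset[of "D \<union> set us \<union> set ws"] unfolding span by blast
  moreover have "K \<inter> A \<subseteq> vec.span A" using vec.span_superset[of A] by blast
  then have "independent_over (K \<inter> A) ws"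
    using ws independent_over_antimono[of "K \<inter> A" A ws] unfolding independent_tuples_def by blast
  ultimately show "us \<in> independent_tuples D (K \<inter> A) (i - vec.dim D)
      \<and> ws \<in> independent_tuples (K \<inter> A) K (m - i)"
    using us ws unfolding independent_tuples_def by auto
next
  assume rhs: "us \<in> independent_tuples D (K \<inter> A) (i - vec.dim D)
      \<and> ws \<in> independent_tuples (K \<inter> A) K (m - i)"
  have K_sub: "vec.subspace K" and K_dim: "vec.dim K = m" and "D \<subseteq> K"
    using K unfolding subspaces_meeting_def by auto
  have tuples: "us \<in> independent_tuples D A (i - vec.dim D)" "ws \<in> independent_tuples A UNIV (m - i)"
    using rhs independent_over_Int[OF A K_sub] unfolding independent_tuples_def by auto
  have "vec.span (D \<union> set us \<union> set ws) \<subseteq> K"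
    using rhs \<open>D \<subseteq> K\<close> K_sub unfolding independent_tuples_def by (intro vec.span_minimal) auto
  moreover have "vec.span (D \<union> set us \<union> set ws) \<in> subspaces_meeting m D A i"
    using span_tuples_mem_subspaces_meeting[OF A assms(2-4) tuples] .
  ultimately have "vec.span (D \<union> set us \<union> set ws) = K"
    using vec.subspace_dim_equal[OF _ K_sub] K_dim unfolding subspaces_meeting_def by auto
  then show "us \<in> independent_tuples D A (i - vec.dim D) \<and> ws \<in> independent_tuples A UNIV (m - i)
      \<and> vec.span (D \<union> set us \<union> set ws) = K"
    using tuples by simp
qed

text \<open>Double counting: a pair (us, ws), where us extends D to a basis of K \<inter> A and ws extends
  K \<inter> A to a basis of K, spans K; the pairs are counted once with K fixed and once globally.\<close>

lemma card_subspaces_meeting_mult: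
  fixes D A :: "('a::{field,finite}^'n) set"
  defines "q \<equiv> real CARD('a)" and "d \<equiv> vec.dim D" and "a \<equiv> vec.dim A"
  assumes A: "vec.subspace A" and DA: "D \<subseteq> A"
    and "d \<le> i" "i \<le> a" "i \<le> m" "a + (m - i) \<le> CARD('n)"
  shows "real (card (subspaces_meeting m D A i))
           * ((\<Prod>j<i - d. q ^ i - q ^ (d + j)) * (\<Prod>j<m - i. q ^ m - q ^ (i + j)))
         = (\<Prod>j<i - d. q ^ a - q ^ (d + j)) * (\<Prod>j<m - i. q ^ CARD('n) - q ^ (a + j))"
proof -
  define X where "X = independent_tuples D A (i - d) \<times> independent_tuples A UNIV (m - i)"
  define span_tuples where "span_tuples = (\<lambda>(us, ws). vec.span (D \<union> set us \<union> set ws))"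
  have "real (card X) = real (card (subspaces_meeting m D A i))
      * ((\<Prod>j<i - d. q ^ i - q ^ (d + j)) * (\<Prod>j<m - i. q ^ m - q ^ (i + j)))"
  proof (rule card_eq_card_mult_fibre)
    show "finite X" unfolding X_def by (simp add: finite_independent_tuples)
    show "span_tuples ` X \<subseteq> subspaces_meeting m D A i"
      using span_tuples_mem_subspaces_meeting[OF A DA] assms(6,8)
      unfolding X_def span_tuples_def d_def by auto
  next
    fix K assume K: "K \<in> subspaces_meeting m D A i"
    then have K_sub: "vec.subspace K" and "vec.dim K = m" "D \<subseteq> K" "vec.dim (K \<inter> A) = i"
      unfolding subspaces_meeting_def by auto
    have "{p \<in> X. span_tuples p = K}
        = independent_tuples D (K \<inter> A) (i - d) \<times> independent_tuples (K \<inter> A) K (m - i)"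
    proof (rule set_eqI)
      fix p :: "('a^'n) list \<times> ('a^'n) list"
      obtain us ws where "p = (us, ws)" by fastforce
      then show "p \<in> {p \<in> X. span_tuples p = K}
          \<longleftrightarrow> p \<in> independent_tuples D (K \<inter> A) (i - d) \<times> independent_tuples (K \<inter> A) K (m - i)"
        using span_tuples_eq_iff[OF A DA _ _ K, of us ws] assms(6,8)
        unfolding X_def span_tuples_def d_def by simp
    qed
    then show "real (card {p \<in> X. span_tuples p = K})
        = (\<Prod>j<i - d. q ^ i - q ^ (d + j)) * (\<Prod>j<m - i. q ^ m - q ^ (i + j))"
      using card_independent_tuples[of "K \<inter> A" D "i - d"] card_independent_tuples[OF K_sub, of "K \<inter> A" "m - i"]
        vec.subspace_inter[OF K_sub A] \<open>vec.dim K = m\<close> \<open>D \<subseteq> K\<close> \<open>vec.dim (K \<inter> A) = i\<close>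
        DA assms(6,8)
      by (simp add: card_cartesian_product q_def d_def)
  qed simp
  moreover have "real (card X)
      = (\<Prod>j<i - d. q ^ a - q ^ (d + j)) * (\<Prod>j<m - i. q ^ CARD('n) - q ^ (a + j))"
    using card_independent_tuples[OF A DA, of "i - d"]
      card_independent_tuples[OF vec.subspace_UNIV, of A "m - i", unfolded vec_dim_card] assms(6-9)
    unfolding X_def by (simp add: card_cartesian_product q_def d_def a_def)
  ultimately show ?thesis by simp
qed

lemma prod_power_diff_ratio:
  fixes q :: real
  assumes q: "q > 1" and "c' \<le> c" "c + r \<le> s"
  shows "(\<Prod>j<r. q ^ s - q ^ (c + j)) / (\<Prod>j<r. q ^ (c' + r) - q ^ (c' + j))
       = q ^ ((c - c') * r) * gauss_binom q (s - c) r"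
proof -
  have factor: "(q ^ s - q ^ (c + j)) / (q ^ (c' + r) - q ^ (c' + j))
      = q ^ (c - c') * ((q ^ (s - c - j) - 1) / (q ^ (r - j) - 1))" if "j < r" for j
  proof -
    have "q ^ s = q ^ (c + j) * q ^ (s - c - j)" "q ^ (c' + r) = q ^ (c' + j) * q ^ (r - j)"
      "q ^ (c + j) = q ^ (c - c') * q ^ (c' + j)"
      using that assms(2,3) by (simp_all flip: power_add)
    moreover have "q ^ (r - j) > 1" using q that by (simp add: one_less_power)
    ultimately show ?thesis using q by (simp add: field_simps)
  qed
  have "(\<Prod>j<r. q ^ s - q ^ (c + j)) / (\<Prod>j<r. q ^ (c' + r) - q ^ (c' + j))
      = (\<Prod>j<r. q ^ (c - c') * ((q ^ (s - c - j) - 1) / (q ^ (r - j) - 1)))"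
    unfolding prod_dividef[symmetric] using factor by (intro prod.cong) simp_all
  also have "\<dots> = q ^ ((c - c') * r) * gauss_binom q (s - c) r"
    unfolding gauss_binom_def prod.distrib by (simp add: power_mult diff_diff_add)
  finally show ?thesis .
qed

lemma card_subspaces_meeting:
  fixes D A :: "('a::{field,finite}^'n) set"
  defines "q \<equiv> real CARD('a)" and "d \<equiv> vec.dim D" and "a \<equiv> vec.dim A"
  assumes A: "vec.subspace A" and DA: "D \<subseteq> A"
    and "d \<le> i" "i \<le> a" "i \<le> m" "a + (m - i) \<le> CARD('n)"
  shows "real (card (subspaces_meeting m D A i))
       = gauss_binom q (a - d) (i - d) * q ^ ((a - i) * (m - i)) * gauss_binom q (CARD('n) - a) (m - i)"
proof -
  have q: "q > 1" using card_field_gt_1 unfolding q_def .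
  define P1 where "P1 = (\<Prod>j<i - d. q ^ (d + (i - d)) - q ^ (d + j))"
  define P2 where "P2 = (\<Prod>j<m - i. q ^ (i + (m - i)) - q ^ (i + j))"
  have "P1 \<noteq> 0" "P2 \<noteq> 0" unfolding P1_def P2_def using q by (auto simp: prod_zero_iff)
  moreover have "real (card (subspaces_meeting m D A i)) * (P1 * P2)
      = (\<Prod>j<i - d. q ^ a - q ^ (d + j)) * (\<Prod>j<m - i. q ^ CARD('n) - q ^ (a + j))"
    using card_subspaces_meeting_mult[OF A DA] assms(6-9)
    unfolding P1_def P2_def q_def d_def a_def by simp
  ultimately have "real (card (subspaces_meeting m D A i))
      = ((\<Prod>j<i - d. q ^ a - q ^ (d + j)) / P1) * ((\<Prod>j<m - i. q ^ CARD('n) - q ^ (a + j)) / P2)"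
    by (simp add: field_simps)
  also have "\<dots> = gauss_binom q (a - d) (i - d) * (q ^ ((a - i) * (m - i)) * gauss_binom q (CARD('n) - a) (m - i))"
    unfolding P1_def P2_def
    using prod_power_diff_ratio[OF q, of d d "i - d" a] prod_power_diff_ratio[OF q, of i a "m - i" "CARD('n)"]
      assms(6-9) by simp
  finally show ?thesis by simp
qed

lemma card_UN_subspaces_meeting:
  fixes D A :: "('a::{field,finite}^'n) set"
  assumes "finite I"
  shows "card (\<Union>i\<in>I. subspaces_meeting m D A i) = (\<Sum>i\<in>I. card (subspaces_meeting m D A i))"
  using assms by (intro card_UN_disjoint) (auto simp: subspaces_meeting_def)

lemma gauss_binom_Suc_self:
  assumes "q > 1"
  shows "gauss_binom q (m + 1) m = theta q m"
proof (induction m)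
  case 0
  then show ?case using assms unfolding gauss_binom_def theta_def by simp
next
  case (Suc m)
  have "gauss_binom q (Suc m + 1) (Suc m)
      = (q ^ (m + 2) - 1) / (q ^ (m + 1) - 1) * gauss_binom q (m + 1) m"
    unfolding gauss_binom_def prod.lessThan_Suc_shift by (simp add: numeral_2_eq_2)
  also have "\<dots> = (q ^ (m + 2) - 1) / (q ^ (m + 1) - 1) * ((q ^ (m + 1) - 1) / (q - 1))"
    using Suc unfolding theta_def by simp
  also have "\<dots> = theta q (Suc m)"
    using one_less_power[OF assms, of "m + 1"] unfolding theta_def by (simp add: numeral_2_eq_2)
  finally show ?case .
qed

section \<open>The family S1 \<union> S2\<close>

locale meeting_pair =
  fixes \<delta> \<pi> :: "('a::{field,finite} ^ 'n) set" and t k :: nat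
  assumes t_less_k: "t < k" and n_large: "2 * k - t < CARD('n) - 1"
    and kspace_\<delta>: "kspace t \<delta>" and kspace_\<pi>: "kspace k \<pi>"
    and dim_\<pi>_Int_\<delta>: "vec.dim (\<pi> \<inter> \<delta>) = t"
begin

definition J :: "('a ^ 'n) set" where
  "J = vec.span (\<pi> \<union> \<delta>)"

definition S1 :: "('a ^ 'n) set set" where
  "S1 = {K. kspace k K \<and> K \<subseteq> J}"

definition S2 :: "('a ^ 'n) set set" where
  "S2 = {K. kspace k K \<and> \<delta> \<subseteq> K \<and> meet_atleast (t + 1) K J}"

lemma card_large: "2 * k + 2 - t \<le> CARD('n)"
  using t_less_k n_large by linarith

lemma subspace_\<delta>: "vec.subspace \<delta>" and dim_\<delta>: "vec.dim \<delta> = t + 1"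
  using kspace_\<delta> unfolding kspace_def by auto

lemma subspace_J: "vec.subspace J"
  unfolding J_def by simp

lemma dim_J: "vec.dim J = k + 2"
  using dim_Un_Int[of \<pi> \<delta>] kspace_\<pi> subspace_\<delta> dim_\<delta> dim_\<pi>_Int_\<delta>
  unfolding J_def kspace_def by simp

lemma \<delta>_subset_J: "\<delta> \<subseteq> J"
  unfolding J_def using vec.span_superset[of "\<pi> \<union> \<delta>"] by blast

lemma kspace_subset_J_iff:
  assumes "kspace k K"
  shows "K \<subseteq> J \<longleftrightarrow> vec.dim (K \<inter> J) = k + 1"
proof
  assume "vec.dim (K \<inter> J) = k + 1"
  then have "K \<inter> J = K"
    using assms vec.subspace_dim_equal[of "K \<inter> J" K] vec.subspace_inter[OF _ subspace_J]
    unfolding kspace_def by auto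
  then show "K \<subseteq> J" by blast
qed (use assms in \<open>simp add: kspace_def Int_absorb2\<close>)

lemma dim_Int_lower_bound:
  assumes "vec.subspace A" "vec.subspace B" "A \<union> B \<subseteq> J"
  shows "vec.dim A + vec.dim B \<le> vec.dim (A \<inter> B) + k + 2"
  using dim_Un_Int[OF assms(1,2)] vec.dim_subset[OF assms(3)] dim_J by simp

lemma meet_S1_S2:
  assumes "A \<in> S1" "B \<in> S2"
  shows "meet_atleast t A B"
proof -
  have A: "vec.subspace A" "vec.dim A = k + 1" "A \<subseteq> J" using assms(1) unfolding S1_def kspace_def by auto
  have B: "vec.subspace (B \<inter> J)" "t + 2 \<le> vec.dim (B \<inter> J)"
    using assms(2) subspace_J vec.subspace_inter unfolding S2_def kspace_def meet_atleast_def by auto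
  have "vec.dim A + vec.dim (B \<inter> J) \<le> vec.dim (A \<inter> (B \<inter> J)) + k + 2"
    using dim_Int_lower_bound[OF A(1) B(1)] A(3) by blast
  moreover have "vec.dim (A \<inter> (B \<inter> J)) \<le> vec.dim (A \<inter> B)" by (rule vec.dim_subset) auto
  ultimately show ?thesis using A(2) B(2) unfolding meet_atleast_def by linarith
qed

lemma t_intersecting_S: "t_intersecting k t (S1 \<union> S2)"
  unfolding t_intersecting_def
proof (intro conjI ballI)
  fix A assume "A \<in> S1 \<union> S2"
  then show "kspace k A" unfolding S1_def S2_def by auto
next
  fix A B assume A: "A \<in> S1 \<union> S2" and B: "B \<in> S1 \<union> S2"
  consider "A \<in> S1" "B \<in> S1" | "A \<in> S1" "B \<in> S2" | "A \<in> S2" "B \<in> S1" | "A \<in> S2" "B \<in> S2"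
    using A B by blast
  then show "meet_atleast t A B"
  proof cases
    case 1
    then have "vec.subspace A" "vec.subspace B" "vec.dim A = k + 1" "vec.dim B = k + 1" "A \<union> B \<subseteq> J"
      unfolding S1_def kspace_def by auto
    then show ?thesis using dim_Int_lower_bound t_less_k unfolding meet_atleast_def by fastforce
  next
    case 2
    then show ?thesis by (rule meet_S1_S2)
  next
    case 3
    then show ?thesis using meet_S1_S2[of B A] unfolding meet_atleast_def by (simp add: Int_commute)
  next
    case 4
    then have "\<delta> \<subseteq> A \<inter> B" unfolding S2_def by auto
    then show ?thesis using vec.dim_subset dim_\<delta> unfolding meet_atleast_def by metis
  qed
qed

lemma exists_S1_meeting_small:
  assumes K: "kspace k K" and "\<delta> \<subseteq> K" "K \<notin> S2"
  obtains H where "H \<in> S1" "vec.dim (K \<inter> H) \<le> t"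
proof -
  have K_sub: "vec.subspace K" using K unfolding kspace_def by simp
  have "vec.dim (K \<inter> J) \<le> vec.dim \<delta>" using assms dim_\<delta> unfolding S2_def meet_atleast_def by auto
  then have K_Int_J: "\<delta> = K \<inter> J"
    using vec.subspace_dim_equal[OF subspace_\<delta> vec.subspace_inter[OF K_sub subspace_J]]
      \<open>\<delta> \<subseteq> K\<close> \<delta>_subset_J by blast
  have "\<not> \<delta> \<subseteq> {0}" using dim_\<delta> vec.dim_eq_0[of \<delta>] by simp
  then obtain v where "v \<in> \<delta>" "v \<noteq> 0" by blast
  then obtain H where H: "vec.subspace H" "H \<subseteq> J" "vec.dim H + 1 = vec.dim J" "v \<notin> H"
    using exists_hyperplane_not_containing[OF subspace_J] \<delta>_subset_J by blast
  have "H \<in> S1" unfolding S1_def kspace_def using H dim_J by simp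
  moreover have "vec.dim (\<delta> \<inter> H) < vec.dim \<delta>"
    using dim_psubset_subspace[OF subspace_\<delta> vec.subspace_inter[OF subspace_\<delta> H(1)]] \<open>v \<in> \<delta>\<close> H(4)
    by blast
  moreover have "K \<inter> H = \<delta> \<inter> H" using K_Int_J H(2) by blast
  ultimately show ?thesis using that dim_\<delta> by simp
qed

lemma exists_plane_meeting_small:
  assumes K: "kspace k K" and "\<not> \<delta> \<subseteq> K" "\<not> K \<subseteq> J"
  obtains T where "vec.subspace T" "\<delta> \<subseteq> T" "T \<subseteq> J" "vec.dim T = t + 2" "vec.dim (K \<inter> T) \<le> t"
proof -
  have K_sub: "vec.subspace K" and dim_K: "vec.dim K = k + 1" using K unfolding kspace_def by auto
  have "vec.dim (K \<inter> \<delta>) < vec.dim \<delta>"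
    using dim_psubset_subspace[OF subspace_\<delta> vec.subspace_inter[OF K_sub subspace_\<delta>]] \<open>\<not> \<delta> \<subseteq> K\<close>
    by blast
  then have dim_K_Int_\<delta>: "vec.dim (K \<inter> \<delta>) \<le> t" using dim_\<delta> by simp
  obtain w where "w \<in> J" "w \<notin> \<delta>" and w_meet: "vec.dim (K \<inter> vec.span (insert w \<delta>)) \<le> t"
  proof (cases "J \<subseteq> vec.span (K \<union> \<delta>)")
    case False
    then obtain w where w: "w \<in> J" "w \<notin> vec.span (K \<union> \<delta>)" by blast
    then have "w \<notin> \<delta>" using vec.span_superset[of "K \<union> \<delta>"] by blast
    then show ?thesis using that w dim_Int_span_insert_eq[OF K_sub subspace_\<delta> w(2)] dim_K_Int_\<delta> by simp
  next
    case True
    \<comment> \<open>then span (K \<union> \<delta>) strictly contains J, so K \<inter> \<delta> is small and any w will do\<close>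
    have "vec.span (K \<union> \<delta>) \<noteq> J" using \<open>\<not> K \<subseteq> J\<close> vec.span_superset[of "K \<union> \<delta>"] by blast
    then have "vec.dim (K \<union> \<delta>) \<noteq> k + 2"
      using vec.subspace_dim_equal[OF subspace_J vec.subspace_span True] dim_J by auto
    moreover have "k + 2 \<le> vec.dim (K \<union> \<delta>)" using vec.dim_subset[OF True] dim_J by simp
    ultimately have "vec.dim (K \<inter> \<delta>) < t"
      using dim_Un_Int[OF K_sub subspace_\<delta>] dim_K dim_\<delta> dim_K_Int_\<delta> by linarith
    have "\<not> J \<subseteq> \<delta>" using vec.dim_subset[of J \<delta>] dim_J dim_\<delta> t_less_k by auto
    then obtain w where "w \<in> J" "w \<notin> \<delta>" by blast
    then show ?thesis
      using that dim_Int_span_insert_le[OF K_sub subspace_\<delta>, of w] \<open>vec.dim (K \<inter> \<delta>) < t\<close> by simp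
  qed
  let ?T = "vec.span (insert w \<delta>)"
  have "w \<notin> vec.span \<delta>" using \<open>w \<notin> \<delta>\<close> subspace_\<delta> vec.span_eq_iff by blast
  then have "vec.dim ?T = t + 2" using dim_\<delta> by (simp add: vec.dim_insert)
  moreover have "\<delta> \<subseteq> ?T" using vec.span_superset[of "insert w \<delta>"] by blast
  moreover have "?T \<subseteq> J" using \<open>w \<in> J\<close> \<delta>_subset_J subspace_J by (intro vec.span_minimal) auto
  ultimately show ?thesis using that[of ?T] w_meet by simp
qed

lemma exists_S2_meeting_small:
  assumes K: "kspace k K" and "\<not> \<delta> \<subseteq> K" "\<not> K \<subseteq> J"
  obtains K' where "K' \<in> S2" "vec.dim (K \<inter> K') \<le> t"
proof -
  obtain T where T: "vec.subspace T" "\<delta> \<subseteq> T" "T \<subseteq> J" "vec.dim T = t + 2" "vec.dim (K \<inter> T) \<le> t"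
    using exists_plane_meeting_small[OF assms] by blast
  have K_sub: "vec.subspace K" and dim_K: "vec.dim K = k + 1" using K unfolding kspace_def by auto
  obtain K' where K': "vec.subspace K'" "T \<subseteq> K'" "vec.dim K' = k + 1"
    "vec.dim (K \<inter> K') \<le> max (vec.dim (K \<inter> T)) (vec.dim K + (k + 1) - CARD('n))"
  proof -
    have "vec.dim T \<le> k + 1" "k + 1 \<le> CARD('n)" using T(4) t_less_k card_large by linarith+
    then show ?thesis using that exists_superspace_meeting_small[OF T(1) K_sub, of "k + 1"] by blast
  qed
  have "vec.dim K + (k + 1) - CARD('n) \<le> t" using dim_K card_large by linarith
  then have "vec.dim (K \<inter> K') \<le> t" using K'(4) T(5) by linarith
  moreover have "vec.dim T \<le> vec.dim (K' \<inter> J)" using K'(2) T(3) by (intro vec.dim_subset) auto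
  then have "K' \<in> S2" unfolding S2_def kspace_def meet_atleast_def using K' T(2,4) by auto
  ultimately show ?thesis using that by blast
qed

theorem maximal_t_intersecting_S: "maximal_t_intersecting k t (S1 \<union> S2)"
  unfolding maximal_t_intersecting_def
proof (intro conjI allI impI t_intersecting_S)
  fix K assume K: "kspace k K \<and> K \<notin> S1 \<union> S2"
  then have "K \<notin> S2" "\<not> K \<subseteq> J" unfolding S1_def by auto
  obtain M where "M \<in> S1 \<union> S2" "vec.dim (K \<inter> M) \<le> t"
  proof (cases "\<delta> \<subseteq> K")
    case True
    then show ?thesis using exists_S1_meeting_small[of K] K \<open>K \<notin> S2\<close> that by blast
  next
    case False
    then show ?thesis using exists_S2_meeting_small[of K] K \<open>\<not> K \<subseteq> J\<close> that by blast
  qed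
  then show "\<not> t_intersecting k t (insert K (S1 \<union> S2))"
    unfolding t_intersecting_def meet_atleast_def by force
qed

text \<open>Here i is a vector dimension: layer i consists of the k-spaces through \<delta> meeting J in a
  projective (i-1)-space.\<close>

abbreviation layer :: "nat \<Rightarrow> ('a ^ 'n) set set" where
  "layer i \<equiv> subspaces_meeting (k + 1) \<delta> J i"

lemma card_layer:
  defines "q \<equiv> real CARD('a)" and "n \<equiv> CARD('n) - 1"
  assumes "t + 1 \<le> i" "i \<le> k + 1"
  shows "real (card (layer i)) = gauss_binom q (k - t + 1) (i - t - 1) * q ^ ((k + 2 - i) * (k + 1 - i))
           * gauss_binom q (n - k - 1) (k + 1 - i)"
proof -
  have "vec.dim J + (k + 1 - i) \<le> CARD('n)" using assms dim_J card_large by linarith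
  then have "real (card (layer i)) = gauss_binom q (vec.dim J - vec.dim \<delta>) (i - vec.dim \<delta>)
      * q ^ ((vec.dim J - i) * (k + 1 - i)) * gauss_binom q (CARD('n) - vec.dim J) (k + 1 - i)"
    using card_subspaces_meeting[OF subspace_J \<delta>_subset_J] assms dim_J dim_\<delta> unfolding q_def by simp
  then show ?thesis using dim_J dim_\<delta> t_less_k unfolding n_def by (simp add: Suc_diff_le)
qed

lemma card_S1: "real (card S1) = theta (real CARD('a)) (k + 1)"
proof -
  have "S1 = subspaces_meeting (k + 1) {0} J (k + 1)"
    unfolding S1_def subspaces_meeting_def using kspace_subset_J_iff vec.subspace_0
    by (auto simp: kspace_def)
  moreover have "vec.dim J + (k + 1 - (k + 1)) \<le> CARD('n)" using dim_J card_large t_less_k by linarith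
  moreover have "vec.dim {0 :: 'a ^ 'n} = 0" by simp
  ultimately have "real (card S1) = gauss_binom (real CARD('a)) (k + 1 + 1) (k + 1)"
    using card_subspaces_meeting[OF subspace_J, of "{0}" "k + 1" "k + 1"] vec.subspace_0[OF subspace_J]
      dim_J by (simp add: gauss_binom_def)
  then show ?thesis using gauss_binom_Suc_self[OF card_field_gt_1] by simp
qed

lemma S2_diff_S1: "S2 - S1 = (\<Union>i\<in>{t + 2..k}. layer i)"
proof -
  have "vec.dim (K \<inter> J) \<le> k + 1" if "kspace k K" for K
    using that vec.dim_subset[of "K \<inter> J" K] unfolding kspace_def by auto
  then show ?thesis
    using kspace_subset_J_iff unfolding S1_def S2_def subspaces_meeting_def meet_atleast_def kspace_def
    by fastforce
qed

lemma kspaces_through_\<delta>: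
  "subspaces_meeting (k + 1) \<delta> UNIV (k + 1) = (\<Union>i\<in>{t + 1..k + 1}. layer i)"
proof -
  have "t + 1 \<le> vec.dim (K \<inter> J) \<and> vec.dim (K \<inter> J) \<le> k + 1" if "vec.dim K = k + 1" "\<delta> \<subseteq> K" for K
    using that dim_\<delta> \<delta>_subset_J vec.dim_subset[of \<delta> "K \<inter> J"] vec.dim_subset[of "K \<inter> J" K] by auto
  then show ?thesis unfolding subspaces_meeting_def by auto
qed

lemma card_kspaces_through_\<delta>:
  defines "q \<equiv> real CARD('a)" and "n \<equiv> CARD('n) - 1"
  shows "real (card (subspaces_meeting (k + 1) \<delta> UNIV (k + 1))) = gauss_binom q (n - t) (k - t)"
  using card_subspaces_meeting[OF vec.subspace_UNIV, of \<delta> "k + 1" "k + 1", unfolded vec_dim_card]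
    dim_\<delta> t_less_k card_large unfolding q_def n_def by (simp add: gauss_binom_def Suc_diff_le)

lemma card_S_eq_sum:
  "real (card (S1 \<union> S2)) = theta (real CARD('a)) (k + 1) + (\<Sum>i\<in>{t + 2..k}. real (card (layer i)))"
proof -
  have "card (S1 \<union> S2) = card S1 + card (S2 - S1)"
    using card_Un_disjoint[of S1 "S2 - S1"] by (simp add: Un_Diff_cancel)
  also have "card (S2 - S1) = (\<Sum>i\<in>{t + 2..k}. card (layer i))"
    unfolding S2_diff_S1 by (rule card_UN_subspaces_meeting) simp
  finally show ?thesis using card_S1 by simp
qed

theorem card_S_closed_form:
  defines "q \<equiv> real CARD('a)" and "n \<equiv> CARD('n) - 1"
  shows "real (card (S1 \<union> S2)) = theta q (k + 1) - theta q (k - t) + gauss_binom q (n - t) (k - t)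
     - q ^ ((k - t + 1) * (k - t)) * gauss_binom q (n - k - 1) (k - t)"
proof -
  have "gauss_binom q (n - t) (k - t) = (\<Sum>i\<in>{t + 1..k + 1}. real (card (layer i)))"
    using card_kspaces_through_\<delta> unfolding q_def n_def
    by (simp only: kspaces_through_\<delta> card_UN_subspaces_meeting[OF finite_atLeastAtMost] of_nat_sum)
  also have "\<dots> = real (card (layer (k + 1))) + real (card (layer (t + 1)))
      + (\<Sum>i\<in>{t + 2..k}. real (card (layer i)))"
  proof -
    have "{t + 1..k + 1} = insert (k + 1) (insert (t + 1) {t + 2..k})" using t_less_k by auto
    then show ?thesis using t_less_k by simp
  qed
  also have "real (card (layer (k + 1))) = theta q (k - t)"
    using card_layer[of "k + 1"] t_less_k gauss_binom_Suc_self[OF card_field_gt_1, of "k - t"]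
    unfolding q_def by (simp add: gauss_binom_def Suc_diff_le)
  also have "real (card (layer (t + 1))) = q ^ ((k - t + 1) * (k - t)) * gauss_binom q (n - k - 1) (k - t)"
    using card_layer[of "t + 1"] t_less_k unfolding q_def n_def by (simp add: gauss_binom_def Suc_diff_le)
  finally show ?thesis using card_S_eq_sum unfolding q_def by simp
qed

theorem card_S_sum_form:
  defines "q \<equiv> real CARD('a)" and "n \<equiv> CARD('n) - 1"
  shows "real (card (S1 \<union> S2)) = theta q (k + 1) +
     (\<Sum>j<k - t - 1. gauss_binom q (k - t + 1) (j + 1) * q ^ ((k - t - j) * (k - t - j - 1))
                       * gauss_binom q (n - k - 1) (k - t - j - 1))"
proof -
  have "(\<Sum>i\<in>{t + 2..k}. real (card (layer i))) = (\<Sum>j<k - t - 1. real (card (layer (t + 2 + j))))"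
    using sum.atLeastLessThan_shift_0[of "\<lambda>i. real (card (layer i))" "t + 2" "k + 1"]
    by (simp add: atLeastLessThanSuc_atLeastAtMost lessThan_atLeast0 comp_def)
  also have "\<dots> = (\<Sum>j<k - t - 1. gauss_binom q (k - t + 1) (j + 1) * q ^ ((k - t - j) * (k - t - j - 1))
                       * gauss_binom q (n - k - 1) (k - t - j - 1))"
  proof (rule sum.cong)
    fix j assume "j \<in> {..<k - t - 1}"
    then have "t + 2 + j - t - 1 = j + 1" "k + 2 - (t + 2 + j) = k - t - j"
      "k + 1 - (t + 2 + j) = k - t - j - 1" "t + 1 \<le> t + 2 + j" "t + 2 + j \<le> k + 1" by auto
    then show "real (card (layer (t + 2 + j))) = gauss_binom q (k - t + 1) (j + 1)
        * q ^ ((k - t - j) * (k - t - j - 1)) * gauss_binom q (n - k - 1) (k - t - j - 1)"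
      using card_layer[of "t + 2 + j"] unfolding q_def n_def by (simp only:)
  qed simp
  finally show ?thesis using card_S_eq_sum unfolding q_def by simp
qed

end

theorem mainTheorem4:
  fixes \<delta> \<pi> :: "('a::{field,finite} ^ 'n) set"
    and t k n :: nat
  defines "n \<equiv> CARD('n) - 1"
    and "q \<equiv> real CARD('a)"
  assumes "t < k" and "n > 2 * k - t"
    and "kspace t \<delta>" and "kspace k \<pi>"
    and "vec.dim (\<pi> \<inter> \<delta>) = t"
  defines "S1 \<equiv> {K. kspace k K \<and> K \<subseteq> vec.span (\<pi> \<union> \<delta>)}"
    and "S2 \<equiv> {K. kspace k K \<and> \<delta> \<subseteq> K \<and> meet_atleast (t + 1) K (vec.span (\<pi> \<union> \<delta>))}"
  shows "maximal_t_intersecting k t (S1 \<union> S2)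
    \<and> real (card (S1 \<union> S2)) = theta q (k + 1) - theta q (k - t) + gauss_binom q (n - t) (k - t)
          - q ^ ((k - t + 1) * (k - t)) * gauss_binom q (n - k - 1) (k - t)
    \<and> real (card (S1 \<union> S2)) = theta q (k + 1) +
          (\<Sum>j<k - t - 1. gauss_binom q (k - t + 1) (j + 1) * q ^ ((k - t - j) * (k - t - j - 1))
                            * gauss_binom q (n - k - 1) (k - t - j - 1))"
proof -
  have config: "meeting_pair \<delta> \<pi> t k"
    using assms(3-7) unfolding n_def by unfold_locales
  have "S1 = meeting_pair.S1 \<delta> \<pi> k" "S2 = meeting_pair.S2 \<delta> \<pi> t k"
    unfolding S1_def S2_def meeting_pair.S1_def[OF config] meeting_pair.S2_def[OF config]
      meeting_pair.J_def[OF config] by simp_all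
  then show ?thesis
    using meeting_pair.maximal_t_intersecting_S[OF config] meeting_pair.card_S_closed_form[OF config]
      meeting_pair.card_S_sum_form[OF config]
    unfolding n_def q_def by simp
qed

end
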